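(* For every $N\in\omega$ there are sets $F_1,\dots,F_{2^N}\in\mathcal{S}$ such that the vector $x=\sum_{j=1}^{2^N}\chi_{F_j}$ satisfies: (1) $x(i)\in\{2^r: r=0,\dots,N\}$ for every $i\in\mathrm{supp}(x)$; (2) $\phi(A_r)\ge 2^{N-r}$ for every $r=0,\dots,N$, where $A_r=\{i\in\omega: x(i)=2^r\}$.
   Context: $\omega=\{1,2,3,\dots\}$. The Schreier family is $\mathcal{S}=\{A\subseteq\omega: |A|\le\min(A)\}$ (including $\emptyset$). For finite $A,B\subseteq\omega$, $A<B$ means $\max A<\min B$. For a finite $A\subseteq\omega$, $\phi(A)$ is the minimal number $m$ such that $A=B_1\cup\dots\cup B_m$ with $B_1<B_2<\dots<B_m$ and each $B_i\in\mathcal{S}$ (the minimal number of consecutive Schreier sets covering $A$). $\chi_F$ is the characteristic function of $F$ and $\mathrm{supp}(x)=\{i:x(i)\neq0\}$. *)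

theory Defs
  imports Main
begin

text \<open>omega = {1,2,3,...} is modelled as the positive naturals.
  Schreier family: finite subsets A of omega with |A| <= min A (empty set included).\<close>
definition schreier :: "nat set \<Rightarrow> bool" where
  "schreier A \<longleftrightarrow> finite A \<and> 0 \<notin> A \<and> (A \<noteq> {} \<longrightarrow> card A \<le> Min A)"

definition phi :: "nat set \<Rightarrow> nat" where
  "phi A = (LEAST m. \<exists>Bs :: nat set list. length Bs = m \<and>
      (\<forall>B\<in>set Bs. schreier B \<and> B \<noteq> {}) \<and>
      sorted_wrt (\<lambda>B C. Max B < Min C) Bs \<and> \<Union>(set Bs) = A)"

definition chisum :: "(nat \<Rightarrow> nat set) \<Rightarrow> nat \<Rightarrow> nat \<Rightarrow> nat" where
  "chisum F n i = (\<Sum>j=1..n. if i \<in> F j then 1 else 0)"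

end

theory Submission
  imports Defs
begin

text \<open>Given a family for N whose sets lie to the left of
  M, take a second one lying between M and q, and add to each of the 2^(N+1) sets the same
  block Q of points beyond q. The value 2^(N+1) is then attained exactly on Q, and each old level
  set of the new family is the level set of the left family followed by that of the right one.
  A level set that splits into k consecutive blocks, each larger than the maximum of the
  previous one, cannot be covered by fewer than k Schreier sets; gluing doubles the number of
  such blocks, which gives phi(A_r) \<ge> 2^(N-r). To make room for Q, the sets of both families
  are required to satisfy |F| + |Q| \<le> min F.\<close>

fun growing_blocks :: "nat \<Rightarrow> nat \<Rightarrow> nat set \<Rightarrow> bool" where
  "growing_blocks 0 s A \<longleftrightarrow> A = {}"
| "growing_blocks (Suc k) s A \<longleftrightarrow> (\<exists>P. P \<noteq> {} \<and> finite P \<and> P \<subseteq> A \<and> s \<le> card P \<and>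
      (\<forall>a\<in>P. \<forall>b\<in>A - P. a < b) \<and> growing_blocks k (Max P + 1) (A - P))"

lemma growing_blocks_finite: "growing_blocks k s A \<Longrightarrow> finite A"
proof (induction k arbitrary: s A)
  case (Suc k)
  then obtain P where "finite P" "P \<subseteq> A" "growing_blocks k (Max P + 1) (A - P)"
    by auto
  with Suc.IH show ?case by (metis Diff_partition finite_UnI)
qed simp

lemma growing_blocks_empty_iff: "growing_blocks k s {} \<longleftrightarrow> k = 0"
  by (cases k) auto

lemma growing_blocks_antimono: "growing_blocks k s A \<Longrightarrow> t \<le> s \<Longrightarrow> growing_blocks k t A"
  by (cases k) (auto intro: le_trans)

lemma growing_blocks_append:
  "growing_blocks a s A \<Longrightarrow> growing_blocks b (Suc M) B \<Longrightarrow> A \<subseteq> {..M} \<Longrightarrow> B \<subseteq> {M<..}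
   \<Longrightarrow> s \<le> Suc M \<Longrightarrow> growing_blocks (a + b) s (A \<union> B)"
proof (induction a arbitrary: s A)
  case 0
  then show ?case using growing_blocks_antimono by simp
next
  case (Suc a)
  from Suc.prems(1) obtain P where P: "P \<noteq> {}" "finite P" "P \<subseteq> A" "s \<le> card P"
    "\<forall>x\<in>P. \<forall>y\<in>A - P. x < y" "growing_blocks a (Max P + 1) (A - P)" by auto
  have "Max P \<in> A" using Max_in[OF P(2,1)] P(3) by blast
  then have "Max P + 1 \<le> Suc M" using Suc.prems(3) by auto
  then have rest: "growing_blocks (a + b) (Max P + 1) ((A - P) \<union> B)"
    using Suc.IH[OF P(6) Suc.prems(2) _ Suc.prems(4)] Suc.prems(3) by auto
  have "(A \<union> B) - P = (A - P) \<union> B" using P(3) Suc.prems(3,4) by fastforce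
  moreover have "\<forall>x\<in>P. \<forall>y\<in>(A \<union> B) - P. x < y"
    using P(3,5) Suc.prems(3,4) by fastforce
  ultimately show ?case using P(1-4) rest by auto
qed

text \<open>Only the first two blocks matter: a Schreier set starting in the first block has at
  most its maximum many elements, fewer than the second block, so what it leaves uncovered of
  the first two blocks can serve as a new first block.\<close>
lemma growing_blocks_truncate:
  assumes blocks: "growing_blocks (Suc (Suc k)) s A"
    and small: "card (A \<inter> {..b}) \<le> Min A"
  shows "growing_blocks (Suc k) 0 (A \<inter> {b<..})"
proof -
  obtain P1 where P1: "P1 \<noteq> {}" "finite P1" "P1 \<subseteq> A" "\<forall>x\<in>P1. \<forall>y\<in>A - P1. x < y"
    "growing_blocks (Suc k) (Max P1 + 1) (A - P1)"
    using blocks[unfolded growing_blocks.simps(2)[of "Suc k"]] by blast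
  obtain P2 where P2: "P2 \<noteq> {}" "finite P2" "P2 \<subseteq> A - P1" "Max P1 + 1 \<le> card P2"
    "\<forall>x\<in>P2. \<forall>y\<in>A - P1 - P2. x < y" "growing_blocks k (Max P2 + 1) (A - P1 - P2)"
    using P1(5)[unfolded growing_blocks.simps(2)[of k]] by blast
  have "finite A" using blocks by (rule growing_blocks_finite)
  have maxP2: "Max P2 \<in> P2" "\<forall>x\<in>P2. x \<le> Max P2" using P2(1,2) by simp_all
  have "b < Max P2"
  proof (rule ccontr)
    assume "\<not> b < Max P2"
    then have "P2 \<subseteq> A \<inter> {..b}" using P2(3) maxP2(2) by fastforce
    then have "card P2 \<le> Min A" using small \<open>finite A\<close> card_mono[of "A \<inter> {..b}" P2] by simp
    moreover have "Max P1 \<in> A" using Max_in[OF P1(2,1)] P1(3) by blast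
    then have "Min A \<le> Max P1" using \<open>finite A\<close> by simp
    ultimately show False using P2(4) by simp
  qed
  define Q where "Q = (P1 \<union> P2) \<inter> {b<..}"
  have "Max P2 \<in> Q" using maxP2(1) \<open>b < Max P2\<close> by (simp add: Q_def)
  moreover have "x \<le> Max P2" if "x \<in> Q" for x
  proof -
    have "x \<in> P1 \<or> x \<in> P2" using that by (simp add: Q_def)
    moreover have "Max P2 \<in> A - P1" using P2(3) maxP2(1) by blast
    ultimately show ?thesis using P1(4) maxP2(2) by (meson less_imp_le)
  qed
  ultimately have "Max Q = Max P2"
    using P1(2) P2(2) by (intro Max_eqI) (simp_all add: Q_def)
  moreover have rest: "A \<inter> {b<..} - Q = A - P1 - P2"
  proof -
    have "b < y" if "y \<in> A - P1 - P2" for y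
      using P2(5) maxP2(1) that \<open>b < Max P2\<close> by (meson less_trans)
    then show ?thesis by (auto simp: Q_def)
  qed
  moreover have "\<forall>x\<in>Q. \<forall>y\<in>A - P1 - P2. x < y" using P1(4) P2(5) by (auto simp: Q_def)
  moreover have "Q \<noteq> {}" "finite Q" "Q \<subseteq> A \<inter> {b<..}"
    using \<open>Max P2 \<in> Q\<close> P1(2,3) P2(2,3) by (auto simp: Q_def)
  ultimately show ?thesis
    unfolding growing_blocks.simps(2) using P2(6) by (intro exI[of _ Q]) (unfold rest, simp)
qed

definition schreier_cover :: "nat set list \<Rightarrow> nat set \<Rightarrow> bool" where
  "schreier_cover Bs A \<longleftrightarrow> (\<forall>B\<in>set Bs. schreier B \<and> B \<noteq> {}) \<and>
      sorted_wrt (\<lambda>B C. Max B < Min C) Bs \<and> \<Union>(set Bs) = A"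

lemma phi_eq_Least: "phi A = (LEAST m. \<exists>Bs. length Bs = m \<and> schreier_cover Bs A)"
  by (simp add: phi_def schreier_cover_def)

lemma schreier_cover_singletons:
  assumes "finite A" "0 \<notin> A"
  shows "schreier_cover (map (\<lambda>a. {a}) (sorted_list_of_set A)) A"
proof -
  have "schreier {a}" if "a \<in> A" for a
    using that assms(2) by (cases "a = 0") (auto simp: schreier_def)
  then show ?thesis
    using assms(1) strict_sorted_list_of_set[of A] by (auto simp: schreier_cover_def sorted_wrt_map)
qed

lemma schreier_cover_ConsD:
  assumes "schreier_cover (B # Bs) A"
  shows "schreier_cover Bs (A \<inter> {Max B<..})" and "A \<inter> {..Max B} = B"
    and "Min A = Min B" and "card B \<le> Min B"
proof -
  let ?U = "\<Union>(set Bs)"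
  have cover: "schreier B" "B \<noteq> {}" "\<forall>C\<in>set Bs. Max B < Min C"
    "schreier_cover Bs ?U" "A = B \<union> ?U"
    using assms by (simp_all add: schreier_cover_def)
  then have B: "finite B" "B \<noteq> {}" "card B \<le> Min B" by (simp_all add: schreier_def)
  have gt: "Max B < u" if "u \<in> ?U" for u
  proof -
    obtain C where C: "C \<in> set Bs" "u \<in> C" using \<open>u \<in> ?U\<close> by blast
    then have "schreier C" using cover(4) by (simp add: schreier_cover_def)
    then have "Min C \<le> u" using C(2) by (simp add: schreier_def)
    then show ?thesis using cover(3) C(1) by fastforce
  qed
  have le: "x \<le> Max B" if "x \<in> B" for x using B(1) that by simp
  have "A \<inter> {Max B<..} = ?U"
  proof (intro set_eqI iffI)
    show "x \<in> ?U" if "x \<in> A \<inter> {Max B<..}" for x using that cover(5) le[of x] by auto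
    show "x \<in> A \<inter> {Max B<..}" if "x \<in> ?U" for x using that cover(5) gt[of x] by auto
  qed
  then show "schreier_cover Bs (A \<inter> {Max B<..})" using cover(4) by simp
  show "A \<inter> {..Max B} = B"
  proof (intro set_eqI iffI)
    show "x \<in> B" if "x \<in> A \<inter> {..Max B}" for x using that cover(5) gt[of x] by auto
    show "x \<in> A \<inter> {..Max B}" if "x \<in> B" for x using that cover(5) le[of x] by auto
  qed
  show "Min A = Min B"
  proof (rule Min_eqI)
    show "finite A" using cover(4,5) B(1) by (simp add: schreier_cover_def schreier_def)
    show "Min B \<in> A" using cover(5) B(1,2) by simp
    show "Min B \<le> y" if "y \<in> A" for y
    proof (cases "y \<in> B")
      case False
      then have "Max B < y" using that cover(5) gt by blast
      moreover have "Min B \<le> Max B" using B(1,2) by simp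
      ultimately show ?thesis by simp
    qed (simp add: B(1))
  qed
  show "card B \<le> Min B" by (fact B(3))
qed

lemma growing_blocks_le_length_cover:
  "schreier_cover Bs A \<Longrightarrow> growing_blocks k s A \<Longrightarrow> k \<le> length Bs"
proof (induction Bs arbitrary: A k s)
  case Nil
  then show ?case by (simp add: schreier_cover_def growing_blocks_empty_iff)
next
  case (Cons B Bs)
  show ?case
  proof (cases "k \<le> 1")
    case False
    then obtain k' where k: "k = Suc (Suc k')" by (cases k; cases "k - 1") auto
    note first = schreier_cover_ConsD[OF Cons.prems(1)]
    have "card (A \<inter> {..Max B}) \<le> Min A" using first(2-4) by simp
    then have "growing_blocks (Suc k') 0 (A \<inter> {Max B<..})"
      using growing_blocks_truncate Cons.prems(2) unfolding k by blast
    then have "Suc k' \<le> length Bs" by (rule Cons.IH[OF first(1)])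
    then show ?thesis unfolding k by simp
  qed simp
qed

lemma growing_blocks_le_phi:
  assumes "growing_blocks k s A" "0 \<notin> A"
  shows "k \<le> phi A"
proof -
  let ?covers = "\<lambda>m. \<exists>Bs. length Bs = m \<and> schreier_cover Bs A"
  have "?covers (length (map (\<lambda>a. {a}) (sorted_list_of_set A)))"
    using schreier_cover_singletons[OF growing_blocks_finite[OF assms(1)] assms(2)] by blast
  then have "?covers (phi A)" unfolding phi_eq_Least by (rule LeastI)
  then obtain Bs where "length Bs = phi A" "schreier_cover Bs A" by blast
  then show ?thesis using growing_blocks_le_length_cover[OF _ assms(1)] by metis
qed

lemma chisum_eq_zero: "(\<And>j. j \<in> {1..m} \<Longrightarrow> i \<notin> F j) \<Longrightarrow> chisum F m i = 0"
  unfolding chisum_def by simp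

lemma chisum_nonzero_in:
  "chisum F m i \<noteq> 0 \<Longrightarrow> (\<And>j. j \<in> {1..m} \<Longrightarrow> F j \<subseteq> S) \<Longrightarrow> i \<in> S"
  by (meson chisum_eq_zero subsetD)

lemma chisum_le: "chisum F m i \<le> m"
proof -
  have "chisum F m i \<le> (\<Sum>j=1..m. 1)" unfolding chisum_def by (rule sum_mono) simp
  then show ?thesis by simp
qed

lemma chisum_eq_self: "(\<And>j. j \<in> {1..m} \<Longrightarrow> i \<in> F j) \<Longrightarrow> chisum F m i = m"
  unfolding chisum_def by simp

lemma chisum_cong:
  "(\<And>j. j \<in> {1..m} \<Longrightarrow> i \<in> F j \<longleftrightarrow> i \<in> G j) \<Longrightarrow> chisum F m i = chisum G m i"
  unfolding chisum_def by (rule sum.cong) auto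

lemma chisum_add: "chisum F (m + m) i = chisum F m i + chisum (\<lambda>j. F (j + m)) m i"
proof -
  have "chisum F (m + m) i = chisum F m i + (\<Sum>j=m+1..m+m. if i \<in> F j then 1 else 0)"
    unfolding chisum_def by (rule sum.ub_add_nat) simp
  also have "(\<Sum>j=m+1..m+m. if i \<in> F j then 1 else 0) = chisum (\<lambda>j. F (j + m)) m i"
    unfolding chisum_def
    by (rule sum.reindex_bij_witness[where i="\<lambda>j. j + m" and j="\<lambda>j. j - m"]) auto
  finally show ?thesis .
qed

definition glue ::
    "nat \<Rightarrow> (nat \<Rightarrow> nat set) \<Rightarrow> (nat \<Rightarrow> nat set) \<Rightarrow> nat set \<Rightarrow> nat \<Rightarrow> nat set" where
  "glue m F G Q j = (if j \<le> m then F j else G (j - m)) \<union> Q"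

lemma chisum_glue:
  "chisum (glue m F G Q) (m + m) i = (if i \<in> Q then m + m else chisum F m i + chisum G m i)"
proof (cases "i \<in> Q")
  case True
  then show ?thesis by (simp add: chisum_eq_self glue_def)
next
  case False
  then have "chisum (glue m F G Q) m i = chisum F m i"
    and "chisum (\<lambda>j. glue m F G Q (j + m)) m i = chisum G m i"
    by (auto intro!: chisum_cong simp: glue_def)
  then show ?thesis using False chisum_add[of "glue m F G Q" m i] by simp
qed

text \<open>The slack k in card (F j) + k \<le> Min (F j) leaves room for k further points above all
  the sets, and the lower bound n allows the family to be moved arbitrarily far to the right.\<close>
definition dyadic_family :: "nat \<Rightarrow> nat \<Rightarrow> nat \<Rightarrow> nat \<Rightarrow> (nat \<Rightarrow> nat set) \<Rightarrow> bool" where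
  "dyadic_family N s k n F \<longleftrightarrow>
     (\<forall>j\<in>{1..2^N}. finite (F j) \<and> F j \<noteq> {} \<and> F j \<subseteq> {n..} \<and> card (F j) + k \<le> Min (F j)) \<and>
     (\<forall>i. chisum F (2^N) i \<noteq> 0 \<longrightarrow> (\<exists>r\<le>N. chisum F (2^N) i = 2^r)) \<and>
     (\<forall>r\<le>N. growing_blocks (2^(N - r)) s {i. chisum F (2^N) i = 2^r})"

lemma dyadic_family_setsD:
  assumes "dyadic_family N s k n F" "j \<in> {1..2^N}"
  shows "finite (F j)" "F j \<noteq> {}" "F j \<subseteq> {n..}" "card (F j) + k \<le> Min (F j)"
  using assms unfolding dyadic_family_def by blast+

lemma dyadic_family_bounds:
  assumes "dyadic_family N s k n F"
  obtains M where "n \<le> M" "\<And>j. j \<in> {1..2^N} \<Longrightarrow> F j \<subseteq> {n..M}"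
proof -
  let ?U = "\<Union>j\<in>{1..2^N}. F j"
  have sets: "\<forall>j\<in>{1..2^N}. finite (F j) \<and> F j \<noteq> {} \<and> F j \<subseteq> {n..}"
    using assms by (simp add: dyadic_family_def)
  then have "finite ?U" by simp
  have "F 1 \<noteq> {}" "F 1 \<subseteq> {n..}" using dyadic_family_setsD[OF assms, of 1] by auto
  then obtain x where "x \<in> F 1" "n \<le> x" by auto
  moreover have "x \<in> ?U" using \<open>x \<in> F 1\<close> by force
  ultimately have "n \<le> Max ?U" using \<open>finite ?U\<close> by (meson Max_ge order_trans)
  moreover have "F j \<subseteq> {n..Max ?U}" if j: "j \<in> {1..2^N}" for j
  proof
    fix x assume "x \<in> F j"
    then have "x \<in> ?U" "n \<le> x" using j sets by auto
    then show "x \<in> {n..Max ?U}" using \<open>finite ?U\<close> by simp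
  qed
  ultimately show ?thesis using that by blast
qed

locale dyadic_gluing =
  fixes N s k n M q :: nat and Q :: "nat set" and F G :: "nat \<Rightarrow> nat set"
  assumes F: "dyadic_family N s (k + card Q) n F"
    and G: "dyadic_family N (Suc M) (k + card Q) (Suc M) G"
    and F_le: "\<And>j. j \<in> {1..2^N} \<Longrightarrow> F j \<subseteq> {..M}"
    and G_less: "\<And>j. j \<in> {1..2^N} \<Longrightarrow> G j \<subseteq> {..<q}"
    and n_le: "n \<le> M" and M_less: "M < q"
    and Q: "finite Q" "Q \<noteq> {}" "Q \<subseteq> {q..}" "s \<le> card Q"
begin

abbreviation "glued \<equiv> glue (2^N) F G Q"

lemma G_greater: "j \<in> {1..2^N} \<Longrightarrow> G j \<subseteq> {M<..}"
proof -
  assume "j \<in> {1..2^N}"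
  then have "G j \<subseteq> {Suc M..}" by (rule dyadic_family_setsD[OF G])
  then show ?thesis by auto
qed

lemma chisum_glued:
  "chisum glued (2^Suc N) i =
     (if i \<in> Q then 2^Suc N else if i \<le> M then chisum F (2^N) i else chisum G (2^N) i)"
proof -
  have "chisum F (2^N) i = 0" if "M < i"
    using that F_le by (intro chisum_eq_zero) (meson atMost_iff leD subsetD)
  moreover have "chisum G (2^N) i = 0" if "i \<le> M"
    using that G_greater by (intro chisum_eq_zero) (meson greaterThan_iff leD subsetD)
  ultimately show ?thesis using chisum_glue[of "2^N" F G Q i] by (auto simp: mult_2)
qed

lemma chisum_F_nonzero: "chisum F (2^N) i \<noteq> 0 \<Longrightarrow> i \<le> M \<and> i \<notin> Q"
  using chisum_nonzero_in[OF _ F_le] M_less Q(3) by fastforce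

lemma chisum_G_nonzero: "chisum G (2^N) i \<noteq> 0 \<Longrightarrow> M < i \<and> i \<notin> Q"
proof -
  assume "chisum G (2^N) i \<noteq> 0"
  then have "i \<in> {M<..} \<inter> {..<q}"
    using G_greater G_less by (intro chisum_nonzero_in[where F=G]) auto
  then show ?thesis using Q(3) by auto
qed

lemma glued_sets:
  assumes "j \<in> {1..2^Suc N}"
  shows "finite (glued j) \<and> glued j \<noteq> {} \<and> glued j \<subseteq> {n..} \<and>
    card (glued j) + k \<le> Min (glued j)"
proof -
  define E where "E = (if j \<le> 2^N then F j else G (j - 2^N))"
  have "finite E \<and> E \<noteq> {} \<and> E \<subseteq> {n..} \<and> card E + (k + card Q) \<le> Min E \<and> E \<subseteq> {..<q}"
  proof (cases "j \<le> 2^N")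
    case True
    then have j: "j \<in> {1..2^N}" and "E = F j" using assms by (simp_all add: E_def)
    then show ?thesis using dyadic_family_setsD[OF F j] F_le[OF j] M_less by auto
  next
    case False
    then have j: "j - 2^N \<in> {1..2^N}" and "E = G (j - 2^N)" using assms by (auto simp: E_def)
    then show ?thesis using dyadic_family_setsD[OF G j] G_less[OF j] n_le by auto
  qed
  then have E: "finite E" "E \<noteq> {}" "E \<subseteq> {n..}" "card E + (k + card Q) \<le> Min E" "E \<subseteq> {..<q}"
    by blast+
  have "Min (E \<union> Q) = Min E"
  proof (rule Min_eqI)
    show "finite (E \<union> Q)" using E(1) Q(1) by simp
    show "Min E \<in> E \<union> Q" using E(1,2) by simp
    show "Min E \<le> y" if "y \<in> E \<union> Q" for y
    proof (cases "y \<in> E")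
      case False
      then have "q \<le> y" using that Q(3) by auto
      moreover have "Min E < q" using E(1,2,5) Min_in by blast
      ultimately show ?thesis by simp
    qed (simp add: E(1))
  qed
  moreover have "card (E \<union> Q) = card E + card Q"
    using E(1,5) Q(1,3) by (intro card_Un_disjoint) fastforce+
  moreover have "glued j = E \<union> Q" by (simp add: glue_def E_def)
  ultimately show ?thesis using E Q(1-3) M_less n_le by auto
qed

lemma s_le_M: "s \<le> M"
proof -
  have j: "(1::nat) \<in> {1..2^N}" by simp
  have "Min (F 1) \<in> F 1" using dyadic_family_setsD(1,2)[OF F j] by simp
  then have "Min (F 1) \<le> M" using F_le[OF j] by auto
  moreover have "card Q \<le> Min (F 1)" using dyadic_family_setsD(4)[OF F j] by simp
  ultimately show ?thesis using Q(4) by simp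
qed

lemma glued_powers:
  assumes "chisum glued (2^Suc N) i \<noteq> 0"
  shows "\<exists>r\<le>Suc N. chisum glued (2^Suc N) i = 2^r"
proof -
  have powers: "\<exists>r\<le>N. chisum X (2^N) i = 2^r" if "dyadic_family N t k' n' X" "chisum X (2^N) i \<noteq> 0"
    for t k' n' X using that by (simp add: dyadic_family_def)
  show ?thesis
  proof (cases "i \<in> Q")
    case False
    then have "\<exists>r\<le>N. chisum glued (2^Suc N) i = 2^r"
      using assms chisum_glued[of i] powers[OF F] powers[OF G] by (cases "i \<le> M") simp_all
    then show ?thesis using le_SucI by blast
  qed (use chisum_glued in auto)
qed

lemma glued_level_top: "{i. chisum glued (2^Suc N) i = 2^Suc N} = Q"
proof -
  have "chisum glued (2^Suc N) i \<noteq> 2^Suc N" if "i \<notin> Q" for i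
    using that chisum_glued[of i] chisum_le[of F "2^N" i] chisum_le[of G "2^N" i] by auto
  then show ?thesis using chisum_glued by auto
qed

lemma glued_level:
  assumes "r \<le> N"
  shows "{i. chisum glued (2^Suc N) i = 2^r} =
    {i. chisum F (2^N) i = 2^r} \<union> {i. chisum G (2^N) i = 2^r}"
proof (intro set_eqI iffI)
  fix i assume i: "i \<in> {i. chisum glued (2^Suc N) i = 2^r}"
  have "i \<notin> Q"
  proof
    assume "i \<in> Q"
    then have "(2::nat)^r = 2^Suc N" using i chisum_glued[of i] by simp
    moreover have "(2::nat)^r \<le> 2^N" using assms by (rule power_increasing) simp
    ultimately show False by simp
  qed
  then show "i \<in> {i. chisum F (2^N) i = 2^r} \<union> {i. chisum G (2^N) i = 2^r}"
    using i chisum_glued[of i] by (cases "i \<le> M") simp_all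
next
  fix i assume "i \<in> {i. chisum F (2^N) i = 2^r} \<union> {i. chisum G (2^N) i = 2^r}"
  then show "i \<in> {i. chisum glued (2^Suc N) i = 2^r}"
    using chisum_F_nonzero[of i] chisum_G_nonzero[of i] chisum_glued[of i] by auto
qed

lemma glued_blocks:
  assumes "r \<le> Suc N"
  shows "growing_blocks (2^(Suc N - r)) s {i. chisum glued (2^Suc N) i = 2^r}"
proof (cases "r = Suc N")
  case True
  have "growing_blocks 1 s Q" using Q by (auto intro!: exI[of _ Q])
  then show ?thesis using True glued_level_top by simp
next
  case False
  then have r: "r \<le> N" using assms by simp
  let ?L1 = "{i. chisum F (2^N) i = 2^r}" and ?L2 = "{i. chisum G (2^N) i = 2^r}"
  have "growing_blocks (2^(N - r)) s ?L1" "growing_blocks (2^(N - r)) (Suc M) ?L2"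
    using F G r by (simp_all add: dyadic_family_def)
  moreover have "?L1 \<subseteq> {..M}" "?L2 \<subseteq> {M<..}"
    using chisum_F_nonzero chisum_G_nonzero by fastforce+
  ultimately have "growing_blocks (2^(N - r) + 2^(N - r)) s (?L1 \<union> ?L2)"
    using growing_blocks_append s_le_M by simp
  moreover have "(2::nat)^(N - r) + 2^(N - r) = 2^(Suc N - r)"
    using r by (simp add: Suc_diff_le)
  ultimately show ?thesis using glued_level[OF r] by simp
qed

lemma dyadic_family_glue: "dyadic_family (Suc N) s k n glued"
  unfolding dyadic_family_def using glued_sets glued_powers glued_blocks by blast

end

lemma dyadic_family_exists: "\<exists>F. dyadic_family N s k n F"
proof (induction N arbitrary: s k n)
  case 0
  define P where "P = {n + k + Suc s..<n + k + Suc s + Suc s}"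
  have chisum_P: "chisum (\<lambda>_. P) (2^0) i = (if i \<in> P then 1 else 0)" for i
    by (simp add: chisum_def)
  then have "{i. chisum (\<lambda>_. P) (2^0) i = 2^0} = P" by auto
  moreover have "growing_blocks 1 s P" by (auto simp: P_def intro!: exI[of _ P])
  ultimately have "dyadic_family 0 s k n (\<lambda>_. P)"
    using chisum_P by (auto simp: dyadic_family_def P_def)
  then show ?case by blast
next
  case (Suc N)
  obtain F where F: "dyadic_family N s (k + Suc s) n F" using Suc.IH by blast
  obtain M where M: "n \<le> M" "\<And>j. j \<in> {1..2^N} \<Longrightarrow> F j \<subseteq> {n..M}"
    using dyadic_family_bounds[OF F] by blast
  obtain G where G: "dyadic_family N (Suc M) (k + Suc s) (Suc M) G" using Suc.IH by blast
  obtain M' where M': "Suc M \<le> M'" "\<And>j. j \<in> {1..2^N} \<Longrightarrow> G j \<subseteq> {Suc M..M'}"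
    using dyadic_family_bounds[OF G] by blast
  define Q where "Q = {Suc M'..<Suc M' + Suc s}"
  interpret dyadic_gluing N s k n M "Suc M'" Q F G
    using F G M M' by unfold_locales (force simp: Q_def)+
  show ?case using dyadic_family_glue by blast
qed

theorem mainTheorem13:
  fixes N :: nat
  assumes "N \<ge> 1"
  shows "\<exists>F :: nat \<Rightarrow> nat set.
           (\<forall>j\<in>{1..2^N}. schreier (F j)) \<and>
           (\<forall>i. i \<ge> 1 \<longrightarrow> chisum F (2^N) i \<noteq> 0 \<longrightarrow>
                 (\<exists>r\<le>N. chisum F (2^N) i = 2^r)) \<and>
           (\<forall>r\<le>N. phi {i. i \<ge> 1 \<and> chisum F (2^N) i = 2^r} \<ge> 2^(N-r))"
proof -
  obtain F where F: "dyadic_family N 1 0 1 F" using dyadic_family_exists by blast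
  have "schreier (F j)" if "j \<in> {1..2^N}" for j
    using dyadic_family_setsD[OF F that] by (auto simp: schreier_def)
  moreover have "\<exists>r\<le>N. chisum F (2^N) i = 2^r" if "chisum F (2^N) i \<noteq> 0" for i
    using F that by (simp add: dyadic_family_def)
  moreover have "2^(N - r) \<le> phi {i. i \<ge> 1 \<and> chisum F (2^N) i = 2^r}" if "r \<le> N" for r
  proof -
    have positive: "i \<ge> 1" if "chisum F (2^N) i \<noteq> 0" for i
      using chisum_nonzero_in[OF that dyadic_family_setsD(3)[OF F]] by simp
    then have "{i. i \<ge> 1 \<and> chisum F (2^N) i = 2^r} = {i. chisum F (2^N) i = 2^r}" by auto
    moreover have "growing_blocks (2^(N - r)) 1 {i. chisum F (2^N) i = 2^r}"
      using F \<open>r \<le> N\<close> by (simp add: dyadic_family_def)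
    ultimately show ?thesis using growing_blocks_le_phi positive by fastforce
  qed
  ultimately show ?thesis by blast
qed

end
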